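(* Let $G$ be an Abelian group acting on a set $X$. Let $A$ be a nonempty finite subset of $G$ and $Y$ a nonempty finite subset of $X$ with $|A\cdot Y|\leq\alpha|Y|$ for some $\alpha\in\mathbb{R}_{\geq0}$. Then there exists a nonempty subset $Z\subset Y$ such that $|AC\cdot Z|\leq\alpha|C\cdot Z|$ for every finite subset $C$ of $G$.
   Context: $AC=\{ac\mid a\in A,c\in C\}$ and $S\cdot Z=\{s\cdot z\mid s\in S,z\in Z\}$. *)

theory Defs
  imports Complex_Main "HOL-Algebra.Group_Action"
begin

definition act_set :: "('a \<Rightarrow> 'b \<Rightarrow> 'b) \<Rightarrow> 'a set \<Rightarrow> 'b set \<Rightarrow> 'b set" where
  "act_set \<phi> S Z = {\<phi> s z | s z. s \<in> S \<and> z \<in> Z}"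

end

theory Submission
  imports Defs
begin

text \<open>Petridis' argument. Choose a nonempty \<open>Z \<subseteq> Y\<close> minimising the ratio \<open>K = |A\<cdot>Z| / |Z|\<close>;
  then \<open>K \<le> \<alpha>\<close>, and \<open>|AC\<cdot>Z| \<le> K |C\<cdot>Z|\<close> follows by induction on \<open>C\<close>. When \<open>C\<close> grows by \<open>x\<close>,
  the set \<open>C\<cdot>Z\<close> gains \<open>x\<cdot>Z\<close> minus the points \<open>x\<cdot>V\<close>, \<open>V = {z \<in> Z. x\<cdot>z \<in> C\<cdot>Z}\<close>, that it already
  contains, while \<open>AC\<cdot>Z\<close> gains \<open>A\<cdot>(x\<cdot>Z) = x\<cdot>(A\<cdot>Z)\<close> minus an overlap containing \<open>x\<cdot>(A\<cdot>V)\<close>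
  (here commutativity is used). Minimality of \<open>Z\<close> gives \<open>|A\<cdot>V| \<ge> K |V|\<close>, so the left side grows
  by at most \<open>K\<close> times the growth of the right side.\<close>

lemma act_set_eq_image: "act_set \<phi> S Z = (\<lambda>(s, z). \<phi> s z) ` (S \<times> Z)"
  unfolding act_set_def by auto

lemma finite_act_set: "finite S \<Longrightarrow> finite Z \<Longrightarrow> finite (act_set \<phi> S Z)"
  by (simp add: act_set_eq_image)

lemma act_set_empty_left [simp]: "act_set \<phi> {} Z = {}"
  unfolding act_set_def by blast

lemma act_set_empty_right [simp]: "act_set \<phi> S {} = {}"
  unfolding act_set_def by blast

lemma act_set_insert_left: "act_set \<phi> (insert x S) Z = act_set \<phi> S Z \<union> \<phi> x ` Z"
  unfolding act_set_def by blast

lemma act_set_Un_right: "act_set \<phi> S (Z \<union> Z') = act_set \<phi> S Z \<union> act_set \<phi> S Z'"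
  unfolding act_set_def by blast

lemma card_Un_image:
  assumes "finite T" "finite Z" "inj_on f Z"
  shows "card (T \<union> f ` Z) + card {z \<in> Z. f z \<in> T} = card T + card Z"
proof -
  have "T \<inter> f ` Z = f ` {z \<in> Z. f z \<in> T}"
    by blast
  moreover have "card (f ` {z \<in> Z. f z \<in> T}) = card {z \<in> Z. f z \<in> T}"
    using assms(3) by (auto intro: card_image inj_on_subset)
  ultimately show ?thesis
    using card_Un_Int[of T "f ` Z"] assms by (simp add: card_image)
qed

lemma of_nat_le_mult_if_cross_mult_le:
  fixes p q m n :: nat and \<alpha> :: real
  assumes "p * n \<le> q * m" "real q \<le> \<alpha> * n" "n > 0"
  shows "real p \<le> \<alpha> * m"
proof -
  have "real p * n \<le> real q * m"
    using assms(1) by (simp flip: of_nat_mult)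
  also have "\<dots> \<le> \<alpha> * m * n"
    using mult_right_mono[OF assms(2), of "real m"] by (simp add: mult_ac)
  finally show ?thesis
    using assms(3) by (simp only: mult_le_cancel_right_pos of_nat_0_less_iff)
qed

lemma ex_subset_min_ratio:
  fixes g :: "'b set \<Rightarrow> nat"
  assumes "finite Y" "Y \<noteq> {}"
  obtains Z where "Z \<subseteq> Y" "Z \<noteq> {}" "\<And>W. W \<subseteq> Y \<Longrightarrow> g Z * card W \<le> g W * card Z"
proof -
  define ratio where "ratio W = real (g W) / real (card W)" for W
  obtain Z where Z: "Z \<subseteq> Y" "Z \<noteq> {}"
    and min: "\<And>W. W \<subseteq> Y \<Longrightarrow> W \<noteq> {} \<Longrightarrow> ratio Z \<le> ratio W"
  proof -
    have "finite {W. W \<subseteq> Y \<and> W \<noteq> {}}" "{W. W \<subseteq> Y \<and> W \<noteq> {}} \<noteq> {}"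
      using assms by auto
    from ex_is_arg_min_if_finite[OF this, of ratio] obtain Z
      where "Z \<subseteq> Y" "Z \<noteq> {}" "\<And>W. W \<subseteq> Y \<Longrightarrow> W \<noteq> {} \<Longrightarrow> \<not> ratio W < ratio Z"
      unfolding is_arg_min_def by blast
    with that show ?thesis
      by (meson not_less)
  qed
  have "g Z * card W \<le> g W * card Z" if "W \<subseteq> Y" for W
  proof (cases "W = {}")
    case False
    have "card Z > 0" "card W > 0"
      using Z \<open>W \<subseteq> Y\<close> False assms(1) by (auto simp: card_gt_0_iff dest: finite_subset)
    with min[OF that False] have "real (g Z) * real (card W) \<le> real (g W) * real (card Z)"
      by (simp add: ratio_def divide_simps)
    then show ?thesis
      by (simp flip: of_nat_mult)
  qed simp
  with Z that show ?thesis
    by blast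
qed

context group_action
begin

lemma act_set_subset: "S \<subseteq> carrier G \<Longrightarrow> Z \<subseteq> E \<Longrightarrow> act_set \<phi> S Z \<subseteq> E"
  unfolding act_set_def by (auto intro: element_image)

lemma act_set_set_mult:
  assumes "A \<subseteq> carrier G" "C \<subseteq> carrier G" "Z \<subseteq> E"
  shows "act_set \<phi> (A <#> C) Z = act_set \<phi> A (act_set \<phi> C Z)"
proof (rule Set.set_eqI)
  fix u
  have composition: "\<phi> (a \<otimes> c) z = \<phi> a (\<phi> c z)" if "a \<in> A" "c \<in> C" "z \<in> Z" for a c z
    using that assms composition_rule by (meson subsetD)
  have "u \<in> act_set \<phi> (A <#> C) Z \<longleftrightarrow> (\<exists>a\<in>A. \<exists>c\<in>C. \<exists>z\<in>Z. u = \<phi> (a \<otimes> c) z)"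
    unfolding act_set_def set_mult_def by blast
  also have "\<dots> \<longleftrightarrow> (\<exists>a\<in>A. \<exists>c\<in>C. \<exists>z\<in>Z. u = \<phi> a (\<phi> c z))"
    using composition by auto
  also have "\<dots> \<longleftrightarrow> u \<in> act_set \<phi> A (act_set \<phi> C Z)"
    unfolding act_set_def by blast
  finally show "u \<in> act_set \<phi> (A <#> C) Z \<longleftrightarrow> u \<in> act_set \<phi> A (act_set \<phi> C Z)" .
qed

lemma act_commute:
  assumes "a \<in> carrier G" "x \<in> carrier G" "z \<in> E" "a \<otimes> x = x \<otimes> a"
  shows "\<phi> a (\<phi> x z) = \<phi> x (\<phi> a z)"
  using assms composition_rule by metis

lemma act_set_image_commute:
  assumes "A \<subseteq> carrier G" "x \<in> carrier G" "Z \<subseteq> E"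
    and "\<And>a. a \<in> A \<Longrightarrow> a \<otimes> x = x \<otimes> a"
  shows "act_set \<phi> A (\<phi> x ` Z) = \<phi> x ` act_set \<phi> A Z"
proof -
  have commute: "\<phi> a (\<phi> x z) = \<phi> x (\<phi> a z)" if "a \<in> A" "z \<in> Z" for a z
    using that assms act_commute by blast
  show ?thesis
  proof (rule Set.set_eqI)
    fix u
    have "u \<in> act_set \<phi> A (\<phi> x ` Z) \<longleftrightarrow> (\<exists>a\<in>A. \<exists>z\<in>Z. u = \<phi> a (\<phi> x z))"
      unfolding act_set_def by blast
    also have "\<dots> \<longleftrightarrow> (\<exists>a\<in>A. \<exists>z\<in>Z. u = \<phi> x (\<phi> a z))"
      using commute by auto
    also have "\<dots> \<longleftrightarrow> u \<in> \<phi> x ` act_set \<phi> A Z"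
      unfolding act_set_def by blast
    finally show "u \<in> act_set \<phi> A (\<phi> x ` Z) \<longleftrightarrow> u \<in> \<phi> x ` act_set \<phi> A Z" .
  qed
qed

lemma act_set_preimage_subset:
  assumes "A \<subseteq> carrier G" "x \<in> carrier G" "Z \<subseteq> E"
    and "\<And>a. a \<in> A \<Longrightarrow> a \<otimes> x = x \<otimes> a"
  shows "act_set \<phi> A {z \<in> Z. \<phi> x z \<in> T} \<subseteq> {u \<in> act_set \<phi> A Z. \<phi> x u \<in> act_set \<phi> A T}"
proof
  fix u assume "u \<in> act_set \<phi> A {z \<in> Z. \<phi> x z \<in> T}"
  then obtain a z where "a \<in> A" "z \<in> Z" "\<phi> x z \<in> T" "u = \<phi> a z"
    unfolding act_set_def by blast
  moreover have "\<phi> x (\<phi> a z) = \<phi> a (\<phi> x z)"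
    using act_commute \<open>a \<in> A\<close> \<open>z \<in> Z\<close> assms by (metis subsetD)
  ultimately show "u \<in> {u \<in> act_set \<phi> A Z. \<phi> x u \<in> act_set \<phi> A T}"
    unfolding act_set_def by auto
qed

lemma card_act_set_insert_le:
  assumes A: "A \<subseteq> carrier G" "finite A" and "finite C"
    and x: "x \<in> carrier G" and commute: "\<And>a. a \<in> A \<Longrightarrow> a \<otimes> x = x \<otimes> a"
    and Z: "Z \<subseteq> E" "finite Z"
    and min: "\<And>W. W \<subseteq> Z \<Longrightarrow> card (act_set \<phi> A Z) * card W \<le> card (act_set \<phi> A W) * card Z"
    and IH: "card (act_set \<phi> A (act_set \<phi> C Z)) * card Z
               \<le> card (act_set \<phi> A Z) * card (act_set \<phi> C Z)"
  shows "card (act_set \<phi> A (act_set \<phi> (insert x C) Z)) * card Z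
           \<le> card (act_set \<phi> A Z) * card (act_set \<phi> (insert x C) Z)"
proof -
  define CZ where "CZ = act_set \<phi> C Z"
  define AZ where "AZ = act_set \<phi> A Z"
  define ACZ where "ACZ = act_set \<phi> A CZ"
  define V where "V = {z \<in> Z. \<phi> x z \<in> CZ}"
  define U where "U = {u \<in> AZ. \<phi> x u \<in> ACZ}"
  have finite: "finite CZ" "finite AZ" "finite ACZ"
    using A \<open>finite C\<close> Z by (simp_all add: CZ_def AZ_def ACZ_def finite_act_set)
  have "AZ \<subseteq> E"
    using A Z by (simp add: AZ_def act_set_subset)
  have inj: "inj_on (\<phi> x) Z" "inj_on (\<phi> x) AZ"
    using inj_prop[OF x] Z \<open>AZ \<subseteq> E\<close> by (auto intro: inj_on_subset)
  have "act_set \<phi> (insert x C) Z = CZ \<union> \<phi> x ` Z"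
    by (simp add: CZ_def act_set_insert_left)
  then have card_xCZ: "card (act_set \<phi> (insert x C) Z) + card V = card CZ + card Z"
    using card_Un_image[OF finite(1) Z(2) inj(1)] by (simp add: V_def)
  have "act_set \<phi> A (act_set \<phi> (insert x C) Z) = ACZ \<union> \<phi> x ` AZ"
    using act_set_image_commute[OF A(1) x Z(1) commute]
    by (simp add: act_set_insert_left act_set_Un_right ACZ_def AZ_def CZ_def)
  then have card_AxCZ: "card (act_set \<phi> A (act_set \<phi> (insert x C) Z)) + card U = card ACZ + card AZ"
    using card_Un_image[OF finite(3) finite(2) inj(2)] by (simp add: U_def)
  have "act_set \<phi> A V \<subseteq> U"
    using act_set_preimage_subset[OF A(1) x Z(1) commute] by (simp add: V_def U_def AZ_def ACZ_def)
  then have "card (act_set \<phi> A V) \<le> card U"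
    using finite(2) by (auto simp: U_def intro: card_mono)
  then have "card AZ * card V \<le> card U * card Z"
    using min[of V] by (simp add: V_def AZ_def) (meson le_trans mult_le_mono1)
  moreover have "card (act_set \<phi> A (act_set \<phi> (insert x C) Z)) * card Z + card U * card Z
                   = card ACZ * card Z + card AZ * card Z"
    using card_AxCZ by (metis add_mult_distrib)
  moreover have "card AZ * card (act_set \<phi> (insert x C) Z) + card AZ * card V
                   = card AZ * card CZ + card AZ * card Z"
    using card_xCZ by (metis add_mult_distrib2)
  ultimately show ?thesis
    using IH unfolding ACZ_def AZ_def CZ_def by linarith
qed

lemma card_act_set_set_mult_le:
  assumes "A \<subseteq> carrier G" "finite A" "C \<subseteq> carrier G" "finite C"
    and "\<And>a c. a \<in> A \<Longrightarrow> c \<in> C \<Longrightarrow> a \<otimes> c = c \<otimes> a"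
    and "Z \<subseteq> E" "finite Z"
    and "\<And>W. W \<subseteq> Z \<Longrightarrow> card (act_set \<phi> A Z) * card W \<le> card (act_set \<phi> A W) * card Z"
  shows "card (act_set \<phi> (A <#> C) Z) * card Z \<le> card (act_set \<phi> A Z) * card (act_set \<phi> C Z)"
proof -
  have "card (act_set \<phi> A (act_set \<phi> C Z)) * card Z \<le> card (act_set \<phi> A Z) * card (act_set \<phi> C Z)"
    using assms(4,3,5)
  proof (induction C rule: finite_induct)
    case (insert x C)
    then have "x \<in> carrier G" "\<And>a. a \<in> A \<Longrightarrow> a \<otimes> x = x \<otimes> a"
      and IH: "card (act_set \<phi> A (act_set \<phi> C Z)) * card Z
                 \<le> card (act_set \<phi> A Z) * card (act_set \<phi> C Z)"
      by auto
    then show ?case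
      using card_act_set_insert_le[OF assms(1,2) insert.hyps(1) _ _ assms(6,7,8) IH] by blast
  qed simp
  then show ?thesis
    using act_set_set_mult assms(1,3,6) by simp
qed

end

theorem mainTheorem14:
  fixes G (structure) and X :: "'b set" and \<phi> :: "'a \<Rightarrow> 'b \<Rightarrow> 'b"
    and A :: "'a set" and Y :: "'b set" and \<alpha> :: real
  assumes "comm_group G" and "group_action G X \<phi>"
    and "A \<subseteq> carrier G" and "finite A" and "A \<noteq> {}"
    and "Y \<subseteq> X" and "finite Y" and "Y \<noteq> {}"
    and "\<alpha> \<ge> 0"
    and "real (card (act_set \<phi> A Y)) \<le> \<alpha> * real (card Y)"
  shows "\<exists>Z. Z \<subseteq> Y \<and> Z \<noteq> {} \<and>
           (\<forall>C. C \<subseteq> carrier G \<and> finite C \<longrightarrow>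
              real (card (act_set \<phi> (A <#> C) Z)) \<le> \<alpha> * real (card (act_set \<phi> C Z)))"
proof -
  interpret group_action G X \<phi> by fact
  interpret comm_group G by fact
  obtain Z where Z: "Z \<subseteq> Y" "Z \<noteq> {}"
    and min: "\<And>W. W \<subseteq> Y \<Longrightarrow> card (act_set \<phi> A Z) * card W \<le> card (act_set \<phi> A W) * card Z"
    using ex_subset_min_ratio[where g = "\<lambda>W. card (act_set \<phi> A W)", OF \<open>finite Y\<close> \<open>Y \<noteq> {}\<close>]
    by blast
  have "finite Z" "Z \<subseteq> X" "card Z > 0" "card Y > 0"
    using Z assms(6-8) by (auto simp: card_gt_0_iff dest: finite_subset)
  have AZ: "real (card (act_set \<phi> A Z)) \<le> \<alpha> * card Z"
    using of_nat_le_mult_if_cross_mult_le[OF min[of Y]] assms(10) \<open>card Y > 0\<close> by simp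
  have min_Z: "\<And>W. W \<subseteq> Z \<Longrightarrow> card (act_set \<phi> A Z) * card W \<le> card (act_set \<phi> A W) * card Z"
    using min Z(1) by (meson order_trans)
  have "real (card (act_set \<phi> (A <#> C) Z)) \<le> \<alpha> * real (card (act_set \<phi> C Z))"
    if C: "C \<subseteq> carrier G" "finite C" for C
  proof -
    have "\<And>a c. a \<in> A \<Longrightarrow> c \<in> C \<Longrightarrow> a \<otimes> c = c \<otimes> a"
      using assms(3) C(1) m_comm by blast
    then have "card (act_set \<phi> (A <#> C) Z) * card Z \<le> card (act_set \<phi> A Z) * card (act_set \<phi> C Z)"
      using card_act_set_set_mult_le assms(3,4) C \<open>Z \<subseteq> X\<close> \<open>finite Z\<close> min_Z by blast
    then show ?thesis
      using of_nat_le_mult_if_cross_mult_le AZ \<open>card Z > 0\<close> by blast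
  qed
  with Z show ?thesis
    by blast
qed

end
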